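(* For all $n>0$ and all $P\in T_{n,0,1}$, $\mathrm{word}(\phi_{n,0,1}(P))=\mathrm{flip}\circ\mathrm{rev}\circ\mathrm{sw}^-_{1,-1}(\mathrm{word}(P))$.
   Context: Words over $\{\mathrm{N},\mathrm{E}\}$ are identified with lattice paths from $(0,0)$ (N = unit north step, E = unit east step); $\mathrm{word}(P)$ is the word of a path $P$. $\mathrm{rev}(w_1\cdots w_n)=w_n\cdots w_1$, and $\mathrm{flip}$ interchanges the letters $\mathrm{N}$ and $\mathrm{E}$. The levels of a word $w=w_1\cdots w_n$ for $\mathrm{sw}^-_{1,-1}$ are $l_0=0$, $l_i=l_{i-1}+1$ if $w_i=\mathrm{N}$, $l_i=l_{i-1}-1$ if $w_i=\mathrm{E}$. $\mathrm{sw}^-_{1,-1}(w)$ is obtained by: for $k=-1,-2,\ldots$ and then $k=\ldots,2,1,0$ (all negative values in decreasing order, then all nonnegative values in decreasing order), scan $w$ from right to left and append each letter $w_i$ ($i\ge1$) with $l_i=k$. $T_{n,0,1}$ is the set of lattice paths from $(0,0)$ to $(n,n)$ with unit north and east steps that never go strictly to the right of the line $x=y$. For $P\in T_{n,0,1}$, its area vector is $g(P)=(g_0,\ldots,g_{n-1})$ where $g_i$ is the number of complete unit squares in the strip $\{x\ge0,\ i\le y\le i+1\}$ lying to the right of $P$ and to the left of the line $x=y$. For $i\ge0$ let $z^{(i)}$ be the subsequence of $g(P)$ of entries in $\{i,i-1\}$, let $M$ be the largest $i$ with $z^{(i)}$ nonempty, and let $\sigma^{(i)}$ be obtained from $z^{(i)}$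 by replacing each $i$ by $\mathrm{N}$ and each $i-1$ by $\mathrm{E}$. Then $\phi_{n,0,1}(P)$ is the path with word $\sigma^{(0)}\sigma^{(1)}\cdots\sigma^{(M)}$. *)

theory Defs
  imports Main
begin

text \<open>Letters N (unit north step) and E (unit east step); a lattice path from (0,0)
 is identified with its word, so word(P) = P.\<close>
datatype step = N | E

definition cnt :: "step \<Rightarrow> step list \<Rightarrow> nat" where
  "cnt a w = length (filter (\<lambda>s. s = a) w)"

definition flip :: "step list \<Rightarrow> step list" where
  "flip w = map (\<lambda>s. case s of N \<Rightarrow> E | E \<Rightarrow> N) w"

text \<open>T_{n,0,1}: paths (0,0) to (n,n) never strictly right of x = y
 (the lattice point after k steps is (cnt E (take k w), cnt N (take k w))).\<close>
definition T01 :: "nat \<Rightarrow> step list set" where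
  "T01 n = {w. cnt N w = n \<and> cnt E w = n \<and>
              (\<forall>k \<le> length w. cnt E (take k w) \<le> cnt N (take k w))}"

definition lev :: "step list \<Rightarrow> nat \<Rightarrow> int" where
  "lev w i = int (cnt N (take i w)) - int (cnt E (take i w))"

definition swblock :: "step list \<Rightarrow> int \<Rightarrow> step list" where
  "swblock w k = map (\<lambda>i. w ! (i - 1))
      (filter (\<lambda>i. lev w i = k) (rev [1..<length w + 1]))"

text \<open>sw^-_{1,-1}: levels -1,-2,... then ..., 2, 1, 0 (levels lie in [-length w, length w]).\<close>
definition sw :: "step list \<Rightarrow> step list" where
  "sw w = concat (map (swblock w) (map (\<lambda>j. - int j) [1..<length w + 1]))
          @ concat (map (swblock w) (map int (rev [0..<length w + 1])))"

text \<open>x-coordinate of the north step of the path in the strip i \<le> y \<le> i+1: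
 number of east steps preceding the (i+1)-th north step.\<close>
definition xrow :: "step list \<Rightarrow> nat \<Rightarrow> nat" where
  "xrow w i = card {k. k < length w \<and> w ! k = E \<and> cnt N (take k w) \<le> i}"

text \<open>g_i: complete unit squares [j,j+1]x[i,i+1] to the right of the path and to the
 left of x = y, i.e. xrow w i \<le> j and j + 1 \<le> i.\<close>
definition area_vec :: "nat \<Rightarrow> step list \<Rightarrow> int list" where
  "area_vec n w = map (\<lambda>i. int (card {j::nat. xrow w i \<le> j \<and> j + 1 \<le> i})) [0..<n]"

definition zseq :: "int list \<Rightarrow> nat \<Rightarrow> int list" where
  "zseq g i = filter (\<lambda>v. v = int i \<or> v = int i - 1) g"

definition sigma :: "int list \<Rightarrow> nat \<Rightarrow> step list" where
  "sigma g i = map (\<lambda>v. if v = int i then N else E) (zseq g i)"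

definition phi :: "nat \<Rightarrow> step list \<Rightarrow> step list" where
  "phi n w = (let g = area_vec n w; M = (GREATEST i. zseq g i \<noteq> [])
              in concat (map (sigma g) [0..<M + 1]))"

end

theory Submission
  imports Defs
begin

text \<open>The i-th entry of the area vector of a Dyck path is the level at which its
(i+1)-th north step starts, so sigma(k) lists, in order, the north steps starting at
level k (as N) and at level k - 1 (as E). The letters ending at level k, read left to
right and flipped, are the north steps from k - 1 (as E) and the east steps from k + 1
(as N). Matching every up step k \<rightarrow> k + 1 with the next down step k + 1 \<rightarrow> k shows that
both sequences agree for every word and every k \<ge> 0, up to one pending N while the word
ends above k. For a Dyck path nothing is pending, the levels are nonnegative, and
concatenating over k gives the theorem, since sw lists the blocks of levels in
decreasing order, each read right to left.\<close>

definition height :: "step list \<Rightarrow> int" where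
  "height w = int (cnt N w) - int (cnt E w)"

definition level_letters :: "step list \<Rightarrow> int \<Rightarrow> step list" where
  "level_letters w k = map (\<lambda>i. w ! (i - 1)) (filter (\<lambda>i. lev w i = k) [1..<length w + 1])"

text \<open>With the 0-based index i, \<open>lev w i\<close> is the level before the letter \<open>w ! i\<close>.\<close>
definition north_levels :: "step list \<Rightarrow> int list" where
  "north_levels w = map (lev w) (filter (\<lambda>i. w ! i = N) [0..<length w])"

definition sigma_at :: "int list \<Rightarrow> int \<Rightarrow> step list" where
  "sigma_at g k = map (\<lambda>v. if v = k then N else E) (filter (\<lambda>v. v = k \<or> v = k - 1) g)"

lemma sigma_eq_sigma_at: "sigma g i = sigma_at g (int i)"
  by (simp add: sigma_def zseq_def sigma_at_def)

lemma cnt_snoc: "cnt a (w @ [x]) = cnt a w + (if x = a then 1 else 0)"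
  by (simp add: cnt_def)

lemma height_snoc: "height (w @ [x]) = height w + (if x = N then 1 else -1)"
  by (cases x) (simp_all add: height_def cnt_snoc)

lemma lev_eq_height_take: "lev w i = height (take i w)"
  by (simp add: lev_def height_def)

lemma lev_le: "lev w i \<le> int i"
proof -
  have "cnt N (take i w) \<le> length (take i w)"
    unfolding cnt_def by (rule length_filter_le)
  then show ?thesis
    by (simp add: lev_def)
qed

lemma level_letters_snoc:
  "level_letters (w @ [x]) k = level_letters w k @ (if height (w @ [x]) = k then [x] else [])"
proof -
  have "map (\<lambda>i. (w @ [x]) ! (i - 1)) (filter (\<lambda>i. lev (w @ [x]) i = k) [1..<length w + 1])
      = level_letters w k"
    unfolding level_letters_def lev_eq_height_take
    by (intro map_cong filter_cong) (auto simp: nth_append)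
  then show ?thesis
    by (simp add: level_letters_def lev_eq_height_take)
qed

lemma north_levels_snoc: "north_levels (w @ [x]) = north_levels w @ (if x = N then [height w] else [])"
proof -
  have "map (lev (w @ [x])) (filter (\<lambda>i. (w @ [x]) ! i = N) [0..<length w]) = north_levels w"
    unfolding north_levels_def lev_eq_height_take
    by (intro map_cong filter_cong) (auto simp: nth_append)
  then show ?thesis
    by (simp add: north_levels_def lev_eq_height_take)
qed

lemma sigma_at_north_levels:
  assumes "k \<ge> 0"
  shows "sigma_at (north_levels w) k = flip (level_letters w k) @ (if k < height w then [N] else [])"
proof (induction w rule: rev_induct)
  case Nil
  then show ?case
    using assms by (simp add: sigma_at_def north_levels_def level_letters_def height_def cnt_def flip_def)
next
  case (snoc x w)
  then show ?case
    by (cases x) (auto simp: north_levels_snoc level_letters_snoc sigma_at_def flip_def height_snoc)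
qed

lemma length_north_levels: "length (north_levels w) = cnt N w"
proof (induction w rule: rev_induct)
  case Nil
  then show ?case by (simp add: north_levels_def cnt_def)
next
  case (snoc x w)
  then show ?case by (simp add: north_levels_snoc cnt_snoc)
qed

lemma xrow_snoc: "xrow (w @ [x]) i = xrow w i + (if x = E \<and> cnt N w \<le> i then 1 else 0)"
proof -
  have "{k. k < length (w @ [x]) \<and> (w @ [x]) ! k = E \<and> cnt N (take k (w @ [x])) \<le> i}
      = {k. k < length w \<and> w ! k = E \<and> cnt N (take k w) \<le> i}
        \<union> (if x = E \<and> cnt N w \<le> i then {length w} else {})"
    by (auto simp: nth_append less_Suc_eq)
  then show ?thesis
    by (simp add: xrow_def)
qed

lemma xrow_eq_cnt_E: "cnt N w \<le> i \<Longrightarrow> xrow w i = cnt E w"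
proof (induction w rule: rev_induct)
  case Nil
  then show ?case by (simp add: xrow_def cnt_def)
next
  case (snoc x w)
  then have "cnt N w \<le> i"
    by (simp add: cnt_snoc split: if_splits)
  with snoc show ?case
    by (cases x) (simp_all add: xrow_snoc cnt_snoc)
qed

lemma nth_north_levels: "i < cnt N w \<Longrightarrow> north_levels w ! i = int i - int (xrow w i)"
proof (induction w rule: rev_induct)
  case Nil
  then show ?case by (simp add: cnt_def)
next
  case (snoc x w)
  show ?case
  proof (cases "x = N \<and> i = cnt N w")
    case True
    then show ?thesis
      by (simp add: north_levels_snoc nth_append length_north_levels xrow_snoc xrow_eq_cnt_E height_def)
  next
    case False
    with snoc have "i < cnt N w"
      by (auto simp: cnt_snoc split: if_splits)
    with snoc show ?thesis
      by (simp add: north_levels_snoc nth_append length_north_levels xrow_snoc)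
  qed
qed

lemma area_vec_eq_north_levels:
  assumes "cnt N w = n" and "\<forall>i \<le> length w. 0 \<le> lev w i"
  shows "area_vec n w = north_levels w"
proof (rule nth_equalityI)
  show "length (area_vec n w) = length (north_levels w)"
    using assms(1) by (simp add: area_vec_def length_north_levels)
next
  fix i assume "i < length (area_vec n w)"
  then have i: "i < cnt N w"
    using assms(1) by (simp add: area_vec_def)
  then have "north_levels w ! i \<in> set (north_levels w)"
    by (simp add: length_north_levels)
  then have "0 \<le> north_levels w ! i"
    using assms(2) by (auto simp: north_levels_def)
  moreover have "{j. xrow w i \<le> j \<and> j + 1 \<le> i} = {xrow w i..<i}"
    by auto
  ultimately show "area_vec n w ! i = north_levels w ! i"
    using i assms(1) by (simp add: area_vec_def nth_north_levels)
qed

lemma concat_map_upt_Greatest: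
  fixes f :: "nat \<Rightarrow> 'a list"
  assumes "\<And>k. f k \<noteq> [] \<Longrightarrow> k \<le> L"
  shows "concat (map f [0..<(GREATEST k. f k \<noteq> []) + 1]) = concat (map f [0..<L + 1])"
proof (cases "\<exists>k. f k \<noteq> []")
  case True
  define M where "M = (GREATEST k. f k \<noteq> [])"
  have "M \<le> L"
    using True GreatestI_nat[of "\<lambda>k. f k \<noteq> []"] assms unfolding M_def by blast
  have "f k = []" if "M < k" for k
    using that assms Greatest_le_nat[of "\<lambda>k. f k \<noteq> []" k L] unfolding M_def by force
  then have "concat (map f [M + 1..<L + 1]) = []"
    by fastforce
  moreover have "[0..<L + 1] = [0..<M + 1] @ [M + 1..<L + 1]"
    using \<open>M \<le> L\<close> upt_add_eq_append[of 0 "M + 1" "L - M"] by simp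
  ultimately show ?thesis
    unfolding M_def[symmetric] by simp
next
  case False
  then have "\<And>xs. concat (map f xs) = []"
    by simp
  then show ?thesis
    by presburger
qed

lemma level_letters_eq_Nil:
  assumes "length w < k"
  shows "level_letters w (int k) = []"
proof -
  have "lev w i \<noteq> int k" if "i \<le> length w" for i
    using lev_le[of w i] that assms by linarith
  then show ?thesis
    by (auto simp: level_letters_def filter_empty_conv)
qed

lemma swblock_eq_rev_level_letters: "swblock w k = rev (level_letters w k)"
  by (simp add: swblock_def level_letters_def rev_map rev_filter)

lemma flip_rev_sw:
  assumes "\<forall>i \<le> length w. 0 \<le> lev w i"
  shows "flip (rev (sw w)) = concat (map (\<lambda>k. flip (level_letters w (int k))) [0..<length w + 1])"
proof -
  have "swblock w (- int j) = []" if "1 \<le> j" for j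
  proof -
    have "lev w i \<noteq> - int j" if "i \<le> length w" for i
      using assms that \<open>1 \<le> j\<close> by fastforce
    then show ?thesis
      by (auto simp: swblock_def filter_empty_conv)
  qed
  then have "concat (map (swblock w) (map (\<lambda>j. - int j) [1..<length w + 1])) = []"
    by fastforce
  then show ?thesis
    by (simp add: sw_def swblock_eq_rev_level_letters rev_concat rev_map flip_def map_concat comp_def)
qed

theorem mainTheorem3:
  fixes n :: nat and P :: "step list"
  assumes "n > 0" and "P \<in> T01 n"
  shows "phi n P = flip (rev (sw P))"
proof -
  have cnt: "cnt N P = n" "cnt E P = n"
    and nonneg: "\<forall>i \<le> length P. 0 \<le> lev P i"
    using assms(2) by (auto simp: T01_def lev_def)
  define g where "g = area_vec n P"
  have sigma_g: "sigma g = (\<lambda>k. flip (level_letters P (int k)))"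
    using sigma_at_north_levels cnt
    by (auto simp: g_def area_vec_eq_north_levels[OF cnt(1) nonneg] sigma_eq_sigma_at height_def)
  have "(\<lambda>k. zseq g k \<noteq> []) = (\<lambda>k. sigma g k \<noteq> [])"
    by (simp add: sigma_def)
  then have "phi n P = concat (map (sigma g) [0..<(GREATEST k. sigma g k \<noteq> []) + 1])"
    by (simp add: phi_def g_def Let_def)
  also have "\<dots> = concat (map (sigma g) [0..<length P + 1])"
    by (rule concat_map_upt_Greatest) (metis sigma_g level_letters_eq_Nil flip_def list.map_disc_iff not_le)
  also have "\<dots> = flip (rev (sw P))"
    by (simp add: flip_rev_sw[OF nonneg] sigma_g)
  finally show ?thesis .
qed

end
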